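(* Let $q$ be a prime power, let $l\ge 1$ and $r_1,\ldots,r_l\ge 1$ be integers, let $\alpha_1,\ldots,\alpha_l$ be pairwise distinct elements of $\mathbb{F}_q^*$, and let $\gamma\in\mathbb{F}_q$. Consider the system in the $r_1+\cdots+r_l$ unknowns $x^{(i)}_j$ ($1\le i\le l$, $1\le j\le r_i$) over $\mathbb{F}_q$: $$\sum_{i=1}^l\sum_{j=1}^{r_i}x^{(i)}_j=\gamma,\qquad \sum_{i=1}^l\alpha_i\sum_{j=1}^{r_i}x^{(i)}_j=0,\qquad \prod_{i,j}x^{(i)}_j\neq 0.$$ For $l=1$ the number of solutions is $A_{r_1}=\psi_{r_1}$ if $\gamma=0$ and $0$ if $\gamma\ne 0$. For $l>1$ the number of solutions is $A_{r_1,\ldots,r_l}$ if $\gamma=0$ and $(\psi_{r_1+\cdots+r_l}-A_{r_1,\ldots,r_l})/(q-1)$ if $\gamma\neq 0$, where $A_{r_1,\ldots,r_l}$ is defined recursively by $$A_{r_1}=\psi_{r_1},\qquad A_{r_1,\ldots,r_l}=\psi_{r_1+\cdots+r_{l-1}}\varphi_{r_l}+(-1)^{r_l}A_{r_1,\ldots,r_{l-1}}.$$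
   Context: For an integer $m\ge 0$, $\psi_m$ denotes the number of $(x_1,\ldots,x_m)\in\mathbb{F}_q^m$ with $\sum_{i=1}^m x_i=0$ and all $x_i\ne 0$, and $\varphi_m$ denotes the number of $(x_1,\ldots,x_m)\in\mathbb{F}_q^m$ with $\sum_{i=1}^m x_i=1$ and all $x_i\neq 0$ (so $\psi_0=1$, $\varphi_0=0$). *)

theory Defs
  imports Complex_Main "HOL-Library.FuncSet"
begin

text \<open>The field F_q is the finite field type 'a, q = CARD('a).\<close>

definition psi :: "'a::{finite,field} itself \<Rightarrow> nat \<Rightarrow> nat" where
  "psi T m = card {x :: nat \<Rightarrow> 'a. x \<in> {..<m} \<rightarrow>\<^sub>E UNIV \<and>
                      (\<Sum>i<m. x i) = 0 \<and> (\<forall>i<m. x i \<noteq> 0)}"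

definition phi :: "'a::{finite,field} itself \<Rightarrow> nat \<Rightarrow> nat" where
  "phi T m = card {x :: nat \<Rightarrow> 'a. x \<in> {..<m} \<rightarrow>\<^sub>E UNIV \<and>
                      (\<Sum>i<m. x i) = 1 \<and> (\<forall>i<m. x i \<noteq> 0)}"

text \<open>A T r l = A_{r_1,...,r_l}, with r_i written r (i-1). Only meaningful for l >= 1.\<close>
fun A :: "'a::{finite,field} itself \<Rightarrow> (nat \<Rightarrow> nat) \<Rightarrow> nat \<Rightarrow> int" where
  "A T r 0 = 0"
| "A T r (Suc 0) = int (psi T (r 0))"
| "A T r (Suc (Suc l)) =
     int (psi T (\<Sum>i<Suc l. r i)) * int (phi T (r (Suc l))) + (-1) ^ r (Suc l) * A T r (Suc l)"

end

(* Split the unknowns into those of the first l - 1 blocks (y) and those of the last block (z),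
   and let a = alpha_l. For gamma = 0 the system becomes  sum z = - sum y  and
   sum_j (w_j - a) y_j = 0, where w_j = alpha_i on block i. The coefficients w_j - a are nonzero,
   and rescaling coordinates shows that a linear equation with nonzero coefficients and
   right-hand side 0 has psi_n nonzero solutions; so there are psi_{r_1+...+r_(l-1)} admissible y.
   Each of them extends in psi_{r_l} or phi_{r_l} ways according as sum y = 0 or not, and
   psi_m - phi_m = (-1)^m; the y with sum y = 0 are exactly the solutions for the first l - 1
   blocks. This is the recursion defining A.
   For gamma <> 0, scaling by gamma shows that every nonzero gamma gives the same count, and
   summing the counts over all gamma gives the number of nonzero solutions of the second equation
   alone, which is psi_{r_1+...+r_l}. *)

theory Submission
  imports Defs
begin

lemma bij_betw_restrict_Un_PiE:
  assumes "J \<inter> K = {}"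
  shows "bij_betw (\<lambda>x. (restrict x J, restrict x K)) ((J \<union> K) \<rightarrow>\<^sub>E S) ((J \<rightarrow>\<^sub>E S) \<times> (K \<rightarrow>\<^sub>E S))"
proof (rule bij_betwI[where g = "\<lambda>(y, z) i. if i \<in> J then y i else z i"])
  show "(\<lambda>(y, z) i. if i \<in> J then y i else z i) \<in> (J \<rightarrow>\<^sub>E S) \<times> (K \<rightarrow>\<^sub>E S) \<rightarrow> (J \<union> K) \<rightarrow>\<^sub>E S"
    by (auto simp: PiE_iff extensional_def)
  fix x assume "x \<in> (J \<union> K) \<rightarrow>\<^sub>E S"
  then show "(\<lambda>(y, z) i. if i \<in> J then y i else z i) (restrict x J, restrict x K) = x"
    by (auto simp: fun_eq_iff PiE_iff extensional_def)
next
  fix yz assume "yz \<in> (J \<rightarrow>\<^sub>E S) \<times> (K \<rightarrow>\<^sub>E S)"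
  then show "(restrict ((\<lambda>(y, z) i. if i \<in> J then y i else z i) yz) J,
              restrict ((\<lambda>(y, z) i. if i \<in> J then y i else z i) yz) K) = yz"
    using assms by (auto simp: fun_eq_iff PiE_iff extensional_def)
qed auto

lemma bij_betw_scale_PiE:
  fixes c :: "'b \<Rightarrow> 'a::field"
  assumes "\<forall>j\<in>J. c j \<noteq> 0"
  shows "bij_betw (\<lambda>x. restrict (\<lambda>j. c j * x j) J) (J \<rightarrow>\<^sub>E -{0}) (J \<rightarrow>\<^sub>E -{0})"
  by (rule bij_betwI[where g = "\<lambda>y. restrict (\<lambda>j. y j / c j) J"])
     (use assms in \<open>auto simp: fun_eq_iff PiE_iff extensional_def\<close>)

lemma bij_betw_reindex_PiE:
  assumes "bij_betw h J' J"
  shows "bij_betw (\<lambda>x. restrict (x \<circ> h) J') (J \<rightarrow>\<^sub>E S) (J' \<rightarrow>\<^sub>E S)"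
proof (rule bij_betwI[where g = "\<lambda>y. restrict (y \<circ> the_inv_into J' h) J"])
  show "(\<lambda>x. restrict (x \<circ> h) J') \<in> (J \<rightarrow>\<^sub>E S) \<rightarrow> (J' \<rightarrow>\<^sub>E S)"
    using assms by (fastforce simp: PiE_iff bij_betw_def)
  show "(\<lambda>y. restrict (y \<circ> the_inv_into J' h) J) \<in> (J' \<rightarrow>\<^sub>E S) \<rightarrow> (J \<rightarrow>\<^sub>E S)"
    using assms by (auto simp: PiE_iff bij_betw_def the_inv_into_f_f)
qed (use assms in \<open>auto simp: fun_eq_iff PiE_iff extensional_def bij_betw_def the_inv_into_f_f
       f_the_inv_into_f the_inv_into_into\<close>)

lemma card_nonzero_tuples_sum_insert:
  fixes t :: "'a::{finite,field}"
  assumes "finite J" "j \<notin> J"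
  shows "card {x \<in> insert j J \<rightarrow>\<^sub>E -{0}. (\<Sum>i\<in>insert j J. x i) = t}
       + card {x \<in> J \<rightarrow>\<^sub>E -{0}. (\<Sum>i\<in>J. x i) = t} = (card (UNIV :: 'a set) - 1) ^ card J"
proof -
  have "bij_betw (\<lambda>x. restrict x J) {x \<in> insert j J \<rightarrow>\<^sub>E -{0}. (\<Sum>i\<in>insert j J. x i) = t}
          {y \<in> J \<rightarrow>\<^sub>E -{0}. (\<Sum>i\<in>J. y i) \<noteq> t}"
    \<comment> \<open>the coordinate at \<open>j\<close> is forced, and it is nonzero iff the others do not sum to \<open>t\<close>\<close>
  proof (rule bij_betwI[where g = "\<lambda>y. y(j := t - (\<Sum>i\<in>J. y i))"])
    show "(\<lambda>x. restrict x J) \<in> {x \<in> insert j J \<rightarrow>\<^sub>E -{0}. (\<Sum>i\<in>insert j J. x i) = t}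
          \<rightarrow> {y \<in> J \<rightarrow>\<^sub>E -{0}. (\<Sum>i\<in>J. y i) \<noteq> t}"
      using assms by (auto simp: PiE_iff)
    show "(\<lambda>y. y(j := t - (\<Sum>i\<in>J. y i))) \<in> {y \<in> J \<rightarrow>\<^sub>E -{0}. (\<Sum>i\<in>J. y i) \<noteq> t}
          \<rightarrow> {x \<in> insert j J \<rightarrow>\<^sub>E -{0}. (\<Sum>i\<in>insert j J. x i) = t}"
      using assms by (auto simp: PiE_iff extensional_def intro!: sum.cong split: if_splits)
  qed (use assms in \<open>auto simp: fun_eq_iff PiE_iff extensional_def\<close>)
  then have "card {x \<in> insert j J \<rightarrow>\<^sub>E -{0}. (\<Sum>i\<in>insert j J. x i) = t}
      = card {y \<in> J \<rightarrow>\<^sub>E -{0}. (\<Sum>i\<in>J. y i) \<noteq> t}"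
    by (rule bij_betw_same_card)
  moreover have "card {y \<in> J \<rightarrow>\<^sub>E -{0}. (\<Sum>i\<in>J. y i) \<noteq> t} + card {y \<in> J \<rightarrow>\<^sub>E -{0}. (\<Sum>i\<in>J. y i) = t}
      = card (J \<rightarrow>\<^sub>E (-{0::'a}))"
    by (subst card_Un_disjoint[symmetric])
       (auto intro: arg_cong[where f = card] simp: finite_PiE assms)
  moreover have "card (J \<rightarrow>\<^sub>E (-{0::'a})) = (card (UNIV :: 'a set) - 1) ^ card J"
    by (simp add: card_funcsetE assms Compl_eq_Diff_UNIV card_Diff_singleton)
  ultimately show ?thesis by simp
qed

lemma psi_eq_card:
  "psi TYPE('a::{finite,field}) m = card {x \<in> {..<m} \<rightarrow>\<^sub>E -{0::'a}. (\<Sum>i<m. x i) = 0}"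
  unfolding psi_def by (simp add: PiE_iff Ball_def conj_ac)

lemma phi_eq_card:
  "phi TYPE('a::{finite,field}) m = card {x \<in> {..<m} \<rightarrow>\<^sub>E -{0::'a}. (\<Sum>i<m. x i) = 1}"
  unfolding phi_def by (simp add: PiE_iff Ball_def conj_ac)

lemma psi_minus_phi: "int (psi TYPE('a::{finite,field}) m) - int (phi TYPE('a) m) = (-1) ^ m"
proof (induction m)
  case 0
  then show ?case by (simp add: psi_eq_card phi_eq_card)
next
  case (Suc m)
  have "psi TYPE('a) (Suc m) + psi TYPE('a) m = phi TYPE('a) (Suc m) + phi TYPE('a) m"
    using card_nonzero_tuples_sum_insert[where 'a = 'a, of "{..<m}" m 0]
      card_nonzero_tuples_sum_insert[where 'a = 'a, of "{..<m}" m 1]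
    by (simp add: psi_eq_card phi_eq_card lessThan_Suc)
  then show ?case using Suc.IH by simp
qed

lemma card_nonzero_linear_solutions:
  fixes w :: "'b \<Rightarrow> 'a::{finite,field}"
  assumes "finite J" and w: "\<forall>j\<in>J. w j \<noteq> 0"
  shows "card {x \<in> J \<rightarrow>\<^sub>E -{0}. (\<Sum>j\<in>J. w j * x j) = t}
       = (if t = 0 then psi TYPE('a) (card J) else phi TYPE('a) (card J))"
proof -
  define s where "s = (if t = 0 then 1 else t)"
  \<comment> \<open>chosen so that \<open>t / s\<close> is 0 or 1, the right-hand sides defining \<open>psi\<close> and \<open>phi\<close>\<close>
  have "s \<noteq> 0" by (simp add: s_def)
  obtain h where h: "bij_betw h {..<card J} J"
    using ex_bij_betw_nat_finite[OF \<open>finite J\<close>] by (auto simp: atLeast0LessThan)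
  have scale: "bij_betw (\<lambda>x. restrict (\<lambda>j. w j / s * x j) J)
      {x \<in> J \<rightarrow>\<^sub>E -{0}. (\<Sum>j\<in>J. w j * x j) = t} {y \<in> J \<rightarrow>\<^sub>E -{0}. (\<Sum>j\<in>J. y j) = t / s}"
  proof (rule bij_betw_Collect)
    show "bij_betw (\<lambda>x. restrict (\<lambda>j. w j / s * x j) J) (J \<rightarrow>\<^sub>E -{0}) (J \<rightarrow>\<^sub>E -{0})"
      using w \<open>s \<noteq> 0\<close> by (intro bij_betw_scale_PiE) auto
    have "(\<Sum>j\<in>J. w j / s * x j) = (\<Sum>j\<in>J. w j * x j) / s" for x
      by (simp add: sum_divide_distrib)
    then show "(\<Sum>j\<in>J. restrict (\<lambda>j. w j / s * x j) J j) = t / s \<longleftrightarrow> (\<Sum>j\<in>J. w j * x j) = t" for x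
      using \<open>s \<noteq> 0\<close> by (simp add: divide_cancel_right)
  qed
  have reindex: "bij_betw (\<lambda>y. restrict (y \<circ> h) {..<card J})
      {y \<in> J \<rightarrow>\<^sub>E -{0}. (\<Sum>j\<in>J. y j) = t / s} {z \<in> {..<card J} \<rightarrow>\<^sub>E -{0}. (\<Sum>i<card J. z i) = t / s}"
  proof (rule bij_betw_Collect)
    show "bij_betw (\<lambda>y. restrict (y \<circ> h) {..<card J}) (J \<rightarrow>\<^sub>E -{0}) ({..<card J} \<rightarrow>\<^sub>E -{0})"
      using h by (rule bij_betw_reindex_PiE)
    show "(\<Sum>i<card J. restrict (y \<circ> h) {..<card J} i) = t / s \<longleftrightarrow> (\<Sum>j\<in>J. y j) = t / s" for y
      using sum.reindex_bij_betw[OF h, of y] by simp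
  qed
  from bij_betw_same_card[OF bij_betw_trans[OF scale reindex]] show ?thesis
    by (simp add: psi_eq_card phi_eq_card s_def)
qed

definition system_solutions :: "'b set \<Rightarrow> ('b \<Rightarrow> 'a::field) \<Rightarrow> 'a \<Rightarrow> ('b \<Rightarrow> 'a) set" where
  "system_solutions J w \<gamma> =
     {x \<in> J \<rightarrow>\<^sub>E -{0}. (\<Sum>j\<in>J. x j) = \<gamma> \<and> (\<Sum>j\<in>J. w j * x j) = 0}"

lemma finite_system_solutions:
  fixes w :: "'b \<Rightarrow> 'a::{finite,field}"
  assumes "finite J"
  shows "finite (system_solutions J w \<gamma>)"
  by (rule finite_subset[where B = "J \<rightarrow>\<^sub>E -{0}"]) (auto simp: system_solutions_def assms finite_PiE)

lemma card_system_solutions_scale: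
  fixes c :: "'a::field"
  assumes "c \<noteq> 0"
  shows "card (system_solutions J w (c * \<gamma>)) = card (system_solutions J w \<gamma>)"
proof -
  have "bij_betw (\<lambda>x. restrict (\<lambda>j. c * x j) J)
      (system_solutions J w \<gamma>) (system_solutions J w (c * \<gamma>))"
    unfolding system_solutions_def
  proof (rule bij_betw_Collect)
    show "bij_betw (\<lambda>x. restrict (\<lambda>j. c * x j) J) (J \<rightarrow>\<^sub>E -{0}) (J \<rightarrow>\<^sub>E -{0})"
      using bij_betw_scale_PiE[of J "\<lambda>_. c"] assms by simp
    show "(\<Sum>j\<in>J. restrict (\<lambda>j. c * x j) J j) = c * \<gamma> \<and> (\<Sum>j\<in>J. w j * restrict (\<lambda>j. c * x j) J j) = 0
        \<longleftrightarrow> (\<Sum>j\<in>J. x j) = \<gamma> \<and> (\<Sum>j\<in>J. w j * x j) = 0" for x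
      using assms by (simp add: sum_distrib_left[symmetric] mult.left_commute)
  qed
  from bij_betw_same_card[OF this] show ?thesis ..
qed

lemma psi_eq_card_system_solutions:
  fixes w :: "'b \<Rightarrow> 'a::{finite,field}"
  assumes "finite J" "\<forall>j\<in>J. w j \<noteq> 0"
  shows "psi TYPE('a) (card J)
       = card (system_solutions J w 0)
         + (card (UNIV :: 'a set) - 1) * card (system_solutions J w 1)"
proof -
  have "{x \<in> J \<rightarrow>\<^sub>E -{0}. (\<Sum>j\<in>J. w j * x j) = 0} = (\<Union>\<gamma>. system_solutions J w \<gamma>)"
    by (auto simp: system_solutions_def)
  then have "psi TYPE('a) (card J) = card (\<Union>\<gamma>. system_solutions J w \<gamma>)"
    using card_nonzero_linear_solutions[OF assms, of 0] by simp
  also have "\<dots> = (\<Sum>\<gamma>\<in>UNIV. card (system_solutions J w \<gamma>))"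
    using finite_system_solutions[OF assms(1), of w]
    by (intro card_UN_disjoint) (auto simp: system_solutions_def)
  also have "\<dots> = card (system_solutions J w 0) + (\<Sum>\<gamma>\<in>UNIV - {0}. card (system_solutions J w \<gamma>))"
    by (rule sum.remove) auto
  also have "(\<Sum>\<gamma>\<in>UNIV - {0}. card (system_solutions J w \<gamma>))
      = (\<Sum>\<gamma>\<in>UNIV - {0::'a}. card (system_solutions J w 1))"
  proof (rule sum.cong)
    fix \<gamma> :: 'a assume "\<gamma> \<in> UNIV - {0}"
    then show "card (system_solutions J w \<gamma>) = card (system_solutions J w 1)"
      using card_system_solutions_scale[of \<gamma> J w 1] by simp
  qed simp
  finally show ?thesis by (simp add: card_Diff_singleton)
qed

lemma card_system_solutions_const_weight:
  fixes w :: "'b \<Rightarrow> 'a::{finite,field}"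
  assumes "finite J" "a \<noteq> 0" "\<forall>j\<in>J. w j = a"
  shows "card (system_solutions J w \<gamma>) = (if \<gamma> = 0 then psi TYPE('a) (card J) else 0)"
proof -
  have "(\<Sum>j\<in>J. w j * x j) = a * (\<Sum>j\<in>J. x j)" for x
    using assms(3) by (simp add: sum_distrib_left)
  then have "system_solutions J w \<gamma> = (if \<gamma> = 0 then {x \<in> J \<rightarrow>\<^sub>E -{0}. (\<Sum>j\<in>J. 1 * x j) = 0} else {})"
    using assms(2) by (auto simp: system_solutions_def)
  then show ?thesis
    using card_nonzero_linear_solutions[OF assms(1), of "\<lambda>_. 1::'a" 0] by simp
qed

lemma card_system_solutions_Un:
  fixes w :: "'b \<Rightarrow> 'a::{finite,field}"
  assumes fin: "finite J" "finite K" and disj: "J \<inter> K = {}"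
    and K: "\<forall>k\<in>K. w k = a" and J: "\<forall>j\<in>J. w j \<noteq> a"
  shows "int (card (system_solutions (J \<union> K) w 0))
       = int (psi TYPE('a) (card J)) * int (phi TYPE('a) (card K))
         + (-1) ^ card K * int (card (system_solutions J w 0))"
proof -
  define Y where "Y = {y \<in> J \<rightarrow>\<^sub>E -{0}. (\<Sum>j\<in>J. (w j - a) * y j) = 0}"
  define Z where "Z y = {z \<in> K \<rightarrow>\<^sub>E -{0}. (\<Sum>k\<in>K. 1 * z k) = - (\<Sum>j\<in>J. y j)}" for y :: "'b \<Rightarrow> 'a"
  have split_eqs: "(\<Sum>j\<in>J \<union> K. x j) = 0 \<and> (\<Sum>j\<in>J \<union> K. w j * x j) = 0
      \<longleftrightarrow> (\<Sum>j\<in>J. (w j - a) * x j) = 0 \<and> (\<Sum>k\<in>K. x k) = - (\<Sum>j\<in>J. x j)" for x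
  proof -
    have "(\<Sum>j\<in>J \<union> K. w j * x j) = (\<Sum>j\<in>J. w j * x j) + a * (\<Sum>k\<in>K. x k)"
      using K by (simp add: sum.union_disjoint fin disj sum_distrib_left)
    moreover have "(\<Sum>j\<in>J. (w j - a) * x j) = (\<Sum>j\<in>J. w j * x j) - a * (\<Sum>j\<in>J. x j)"
      by (simp add: left_diff_distrib sum_subtractf sum_distrib_left)
    moreover have "(\<Sum>j\<in>J \<union> K. x j) = (\<Sum>j\<in>J. x j) + (\<Sum>k\<in>K. x k)"
      by (simp add: sum.union_disjoint fin disj)
    moreover have "sJ + sK = 0 \<and> wJ + a * sK = 0 \<longleftrightarrow> wJ - a * sJ = 0 \<and> sK = - sJ" for sJ sK wJ :: 'a
      by (auto simp: add_eq_0_iff)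
    ultimately show ?thesis by simp
  qed
  have "bij_betw (\<lambda>x. (restrict x J, restrict x K)) (system_solutions (J \<union> K) w 0) (SIGMA y:Y. Z y)"
  proof -
    have "(SIGMA y:Y. Z y) = {p \<in> (J \<rightarrow>\<^sub>E -{0}) \<times> (K \<rightarrow>\<^sub>E -{0}).
        (\<Sum>j\<in>J. (w j - a) * fst p j) = 0 \<and> (\<Sum>k\<in>K. snd p k) = - (\<Sum>j\<in>J. fst p j)}"
      by (auto simp: Y_def Z_def)
    then show ?thesis unfolding system_solutions_def split_eqs
      by (simp add: bij_betw_Collect[OF bij_betw_restrict_Un_PiE[OF disj]])
  qed
  then have "card (system_solutions (J \<union> K) w 0) = (\<Sum>y\<in>Y. card (Z y))"
    using fin by (simp add: bij_betw_same_card Y_def Z_def finite_PiE)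
  also have "\<dots> = (\<Sum>y\<in>Y. if (\<Sum>j\<in>J. y j) = 0 then psi TYPE('a) (card K) else phi TYPE('a) (card K))"
    unfolding Z_def using card_nonzero_linear_solutions[OF fin(2), of "\<lambda>_. 1::'a"] by simp
  finally have "int (card (system_solutions (J \<union> K) w 0))
      = (\<Sum>y\<in>Y. int (if (\<Sum>j\<in>J. y j) = 0 then psi TYPE('a) (card K) else phi TYPE('a) (card K)))"
    by simp
  also have "\<dots> = (\<Sum>y\<in>Y. int (phi TYPE('a) (card K))
      + (if (\<Sum>j\<in>J. y j) = 0 then (-1) ^ card K else 0))"
    using psi_minus_phi[where 'a = 'a, of "card K"] by (intro sum.cong) (auto simp: algebra_simps)
  also have "\<dots> = int (card Y) * int (phi TYPE('a) (card K))
      + (-1) ^ card K * int (card {y \<in> Y. (\<Sum>j\<in>J. y j) = 0})"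
    using fin by (simp add: sum.distrib sum.inter_filter[symmetric] Y_def finite_PiE)
  also have "card Y = psi TYPE('a) (card J)"
    unfolding Y_def using card_nonzero_linear_solutions[OF fin(1), of "\<lambda>j. w j - a" 0] J by simp
  also have "{y \<in> Y. (\<Sum>j\<in>J. y j) = 0} = system_solutions J w 0"
    by (auto simp: Y_def system_solutions_def left_diff_distrib sum_subtractf
        sum_distrib_left[symmetric])
  finally show ?thesis .
qed

lemma card_system_solutions_one_block:
  fixes \<alpha> :: "nat \<Rightarrow> 'a::{finite,field}"
  assumes "\<alpha> 0 \<noteq> 0"
  shows "card (system_solutions (SIGMA i:{..<1}. {..<r i}) (\<lambda>p. \<alpha> (fst p)) \<gamma>)
       = (if \<gamma> = 0 then psi TYPE('a) (r 0) else 0)"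
proof -
  have "(SIGMA i:{..<1}. {..<r i}) = {0} \<times> {..<r 0}" by auto
  then show ?thesis
    using card_system_solutions_const_weight[of "{0} \<times> {..<r 0}" "\<alpha> 0" "\<lambda>p. \<alpha> (fst p)" \<gamma>] assms
    by (simp add: card_cartesian_product)
qed

lemma card_system_solutions_blocks:
  fixes \<alpha> :: "nat \<Rightarrow> 'a::{finite,field}"
  assumes "l \<ge> 1" "\<alpha> 0 \<noteq> 0" "inj_on \<alpha> {..<l}"
  shows "int (card (system_solutions (SIGMA i:{..<l}. {..<r i}) (\<lambda>p. \<alpha> (fst p)) 0))
       = A TYPE('a) r l"
  using assms
proof (induction l rule: nat_induct_at_least)
  case base
  then show ?case using card_system_solutions_one_block[of \<alpha> r 0] by simp
next
  case (Suc l)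
  obtain l' where l': "l = Suc l'" using \<open>l \<ge> 1\<close> by (cases l) auto
  have "inj_on \<alpha> {..<l}"
    using \<open>inj_on \<alpha> {..<Suc l}\<close> by (rule inj_on_subset) auto
  then have IH: "int (card (system_solutions (SIGMA i:{..<l}. {..<r i}) (\<lambda>p. \<alpha> (fst p)) 0))
      = A TYPE('a) r l"
    using Suc.IH \<open>\<alpha> 0 \<noteq> 0\<close> by blast
  have blocks: "(SIGMA i:{..<Suc l}. {..<r i}) = (SIGMA i:{..<l}. {..<r i}) \<union> {l} \<times> {..<r l}"
    by (auto simp: less_Suc_eq)
  have "\<alpha> i \<noteq> \<alpha> l" if "i < l" for i
    using \<open>inj_on \<alpha> {..<Suc l}\<close> that by (auto simp: inj_on_def)
  then have "int (card (system_solutions (SIGMA i:{..<Suc l}. {..<r i}) (\<lambda>p. \<alpha> (fst p)) 0))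
      = int (psi TYPE('a) (\<Sum>i<l. r i)) * int (phi TYPE('a) (r l))
        + (-1) ^ r l * int (card (system_solutions (SIGMA i:{..<l}. {..<r i}) (\<lambda>p. \<alpha> (fst p)) 0))"
    unfolding blocks by (subst card_system_solutions_Un) (auto simp: card_cartesian_product)
  also have "\<dots> = A TYPE('a) r (Suc l)"
    using IH by (simp add: l')
  finally show ?case .
qed

theorem proposition2p2:
  fixes l :: nat and r :: "nat \<Rightarrow> nat" and \<alpha> :: "nat \<Rightarrow> 'a::{finite,field}" and \<gamma> :: 'a
  assumes "l \<ge> 1"
    and "\<forall>i<l. r i \<ge> 1"
    and "\<forall>i<l. \<alpha> i \<noteq> 0"
    and "inj_on \<alpha> {..<l}"
  defines "I \<equiv> {(i, j). i < l \<and> j < r i}"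
  defines "S \<equiv> {x :: nat \<times> nat \<Rightarrow> 'a. x \<in> I \<rightarrow>\<^sub>E UNIV \<and>
                  (\<Sum>i<l. \<Sum>j<r i. x (i, j)) = \<gamma> \<and>
                  (\<Sum>i<l. \<alpha> i * (\<Sum>j<r i. x (i, j))) = 0 \<and>
                  (\<Prod>p\<in>I. x p) \<noteq> 0}"
  shows "(l = 1 \<longrightarrow> real (card S) = (if \<gamma> = 0 then real (psi TYPE('a) (r 0)) else 0))
       \<and> (l > 1 \<longrightarrow> real (card S) =
            (if \<gamma> = 0 then real_of_int (A TYPE('a) r l)
             else (real (psi TYPE('a) (\<Sum>i<l. r i)) - real_of_int (A TYPE('a) r l))
                  / (real (card (UNIV :: 'a set)) - 1)))"
proof -
  let ?w = "\<lambda>p. \<alpha> (fst p)"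
  have I: "I = (SIGMA i:{..<l}. {..<r i})"
    by (auto simp: I_def)
  have S: "S = system_solutions I ?w \<gamma>"
    by (auto simp: S_def system_solutions_def I sum.Sigma sum_distrib_left PiE_iff case_prod_unfold)
  have A: "int (card (system_solutions I ?w 0)) = A TYPE('a) r l"
    unfolding I using assms(1,3,4) by (intro card_system_solutions_blocks) auto
  have "psi TYPE('a) (\<Sum>i<l. r i)
      = card (system_solutions I ?w 0)
        + (card (UNIV :: 'a set) - 1) * card (system_solutions I ?w 1)"
    using psi_eq_card_system_solutions[of I ?w] assms by (simp add: I)
  moreover have "card S = card (system_solutions I ?w 1)" if "\<gamma> \<noteq> 0"
    using card_system_solutions_scale[OF that, of I ?w 1] by (simp add: S)
  moreover have "card (UNIV :: 'a set) \<ge> 2"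
    using card_mono[of "UNIV :: 'a set" "{0, 1}"] by simp
  moreover have "card S = (if \<gamma> = 0 then psi TYPE('a) (r 0) else 0)" if "l = 1"
    using card_system_solutions_one_block[of \<alpha> r \<gamma>] assms(3) that by (simp add: S I)
  ultimately show ?thesis
    using A by (auto simp: S field_simps of_nat_diff)
qed

end
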